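(* Let $S\subseteq[n]$ with $|S|=\tau$ and $i\in S$. Then (1) $C_f^{(i)}\le C_f^{(S)}\le C_f$; and (2) $\frac1nC_f^{\otimes}=C_f^{1}\le C_f^{\tau}\le C_f^{n}=C_f$.
   Context: Let $\mathcal{M}=\mathcal{M}_1\times\cdots\times\mathcal{M}_n$, each $\mathcal{M}_i\subset\mathbb{R}^{m_i}$ nonempty compact convex, and $f:\mathbb{R}^m\to\mathbb{R}$ differentiable. Notation: for $S\subseteq[n]$, $x_{(S)}$ is the subvector of blocks in $S$, $\mathcal{M}^{(S)}=\prod_{i\in S}\mathcal{M}_i$, $\nabla_{(S)}f$ the partial gradient, $s_{[S]}$ is $s_{(S)}$ padded by zeros outside $S$. Set curvature: $C_f^{(S)}=\sup\frac{2}{\gamma^2}\big(f(y)-f(x)-\langle y_{(S)}-x_{(S)},\nabla_{(S)}f(x)\rangle\big)$ over $x\in\mathcal{M}$, $s_{(S)}\in\mathcal{M}^{(S)}$, $\gamma\in(0,1]$, $y=x+\gamma(s_{[S]}-x_{[S]})$. $C_f^{(i)}=C_f^{(\{i\})}$ (coordinate curvature), $C_f^{\otimes}=\sum_{i=1}^nC_f^{(i)}$ (product curvature), $C_f=\sup_{x,s\in\mathcal{M},\gamma\in(0,1],y=x+\gamma(s-x)}\frac{2}{\gamma^2}(f(y)-f(x)-\langle y-x,\nabla f(x)\rangle)$ (global curvature), and $C_f^\tau=\binom{n}{\tau}^{-1}\sum_{S\subseteq[n],|S|=\tau}C_f^{(S)}$. *)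

theory Defs
  imports "HOL-Analysis.Analysis"
begin

text \<open>Coordinates of R^m are indexed by the finite type 'm; blk j is the block (in 1..n)
  that coordinate j belongs to. A block vector of R^{m_i} is represented as a vector of R^m
  supported on block i.\<close>

definition bproj :: "('m \<Rightarrow> nat) \<Rightarrow> nat set \<Rightarrow> real^'m \<Rightarrow> real^'m" where
  "bproj blk S x = (\<chi> j. if blk j \<in> S then x $ j else 0)"

text \<open>prodset blk Mi S: the vectors s_[S] with s_(S) in M^(S) (padded by zeros outside S).\<close>
definition prodset :: "('m \<Rightarrow> nat) \<Rightarrow> (nat \<Rightarrow> (real^'m) set) \<Rightarrow> nat set \<Rightarrow> (real^'m) set" where
  "prodset blk Mi S = {s. (\<forall>j. blk j \<notin> S \<longrightarrow> s $ j = 0) \<and> (\<forall>i\<in>S. bproj blk {i} s \<in> Mi i)}"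

definition set_curv :: "(real^'m \<Rightarrow> real) \<Rightarrow> ('m \<Rightarrow> nat) \<Rightarrow> (nat \<Rightarrow> (real^'m) set) \<Rightarrow> nat \<Rightarrow> nat set \<Rightarrow> ereal" where
  "set_curv f blk Mi n S =
     (SUP (x, s, \<gamma>) \<in> {(x, s, \<gamma>). x \<in> prodset blk Mi {1..n} \<and> s \<in> prodset blk Mi S \<and> 0 < \<gamma> \<and> \<gamma> \<le> (1::real)}.
        ereal (let y = x + \<gamma> *\<^sub>R (s - bproj blk S x) in
               2 / \<gamma>^2 * (f y - f x - frechet_derivative f (at x) (bproj blk S (y - x)))))"

definition coord_curv :: "(real^'m \<Rightarrow> real) \<Rightarrow> ('m \<Rightarrow> nat) \<Rightarrow> (nat \<Rightarrow> (real^'m) set) \<Rightarrow> nat \<Rightarrow> nat \<Rightarrow> ereal" where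
  "coord_curv f blk Mi n i = set_curv f blk Mi n {i}"

definition prod_curv :: "(real^'m \<Rightarrow> real) \<Rightarrow> ('m \<Rightarrow> nat) \<Rightarrow> (nat \<Rightarrow> (real^'m) set) \<Rightarrow> nat \<Rightarrow> ereal" where
  "prod_curv f blk Mi n = (\<Sum>i\<in>{1..n}. coord_curv f blk Mi n i)"

definition glob_curv :: "(real^'m \<Rightarrow> real) \<Rightarrow> (real^'m) set \<Rightarrow> ereal" where
  "glob_curv f M =
     (SUP (x, s, \<gamma>) \<in> {(x, s, \<gamma>). x \<in> M \<and> s \<in> M \<and> 0 < \<gamma> \<and> \<gamma> \<le> (1::real)}.
        ereal (let y = x + \<gamma> *\<^sub>R (s - x) in
               2 / \<gamma>^2 * (f y - f x - frechet_derivative f (at x) (y - x))))"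

definition tau_curv :: "(real^'m \<Rightarrow> real) \<Rightarrow> ('m \<Rightarrow> nat) \<Rightarrow> (nat \<Rightarrow> (real^'m) set) \<Rightarrow> nat \<Rightarrow> nat \<Rightarrow> ereal" where
  "tau_curv f blk Mi n \<tau> =
     ereal (1 / real (n choose \<tau>)) * (\<Sum>S\<in>{S. S \<subseteq> {1..n} \<and> card S = \<tau>}. set_curv f blk Mi n S)"

end

theory Submission
  imports Defs
begin

text \<open>Part (1) is monotonicity of the set curvature in S: a feasible triple (x, s, \<gamma>) for T \<subseteq> S
  stays feasible for S once s is completed by the blocks of x in S - T, and this leaves the
  point y and the linear term unchanged. For S = [n] the set curvature is the global one.
  Part (2) is double counting: every block i lies in C(n-1, \<tau>-1) of the \<tau>-subsets, and
  \<tau> C(n, \<tau>) = n C(n-1, \<tau>-1), so averaging C^(S) \<ge> C^(i) (i \<in> S) over the \<tau>-subsets gives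
  C^\<tau> \<ge> C^\<otimes>/n = C^1, while C^(S) \<le> C = C^n gives C^\<tau> \<le> C^n.\<close>

lemma bproj_nth [simp]: "bproj blk S x $ j = (if blk j \<in> S then x $ j else 0)"
  by (simp add: bproj_def)

lemma bproj_0 [simp]: "bproj blk S 0 = 0"
  by (simp add: vec_eq_iff)

lemma bproj_in_prodset:
  assumes "x \<in> prodset blk Mi A" "S \<subseteq> A"
  shows "bproj blk S x \<in> prodset blk Mi S"
  unfolding prodset_def
proof (intro CollectI conjI allI impI ballI)
  fix k assume k: "k \<in> S"
  have "bproj blk {k} (bproj blk S x) = bproj blk {k} x" using k by (auto simp: vec_eq_iff)
  then show "bproj blk {k} (bproj blk S x) \<in> Mi k" using assms k by (auto simp: prodset_def)
qed simp

lemma prodset_extend: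
  assumes "T \<subseteq> S" "S \<subseteq> A" "x \<in> prodset blk Mi A" "s \<in> prodset blk Mi T"
  shows "s + bproj blk (S - T) x \<in> prodset blk Mi S"
  unfolding prodset_def
proof (intro CollectI conjI allI impI ballI)
  have s0: "\<And>j. blk j \<notin> T \<Longrightarrow> s $ j = 0" using assms(4) by (simp add: prodset_def)
  fix j assume "blk j \<notin> S"
  then show "(s + bproj blk (S - T) x) $ j = 0" using s0 assms(1) by auto
next
  have s0: "\<And>j. blk j \<notin> T \<Longrightarrow> s $ j = 0" using assms(4) by (simp add: prodset_def)
  fix k assume k: "k \<in> S"
  show "bproj blk {k} (s + bproj blk (S - T) x) \<in> Mi k"
  proof (cases "k \<in> T")
    case True
    then have "bproj blk {k} (s + bproj blk (S - T) x) = bproj blk {k} s" by (auto simp: vec_eq_iff)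
    then show ?thesis using assms(4) True by (simp add: prodset_def)
  next
    case False
    then have "bproj blk {k} (s + bproj blk (S - T) x) = bproj blk {k} x"
      using k s0 by (auto simp: vec_eq_iff)
    then show ?thesis using assms(2,3) k by (auto simp: prodset_def)
  qed
qed

lemma prodset_nonempty:
  assumes blk: "\<forall>j. blk j \<in> A"
    and Mi_sub: "\<forall>k\<in>A. Mi k \<subseteq> {v. \<forall>j. blk j \<noteq> k \<longrightarrow> v $ j = 0}"
    and Mi_ne: "\<forall>k\<in>A. Mi k \<noteq> {}"
  shows "prodset blk Mi A \<noteq> {}"
proof -
  define m where "m k = (SOME v. v \<in> Mi k)" for k
  have m: "m k \<in> Mi k" if "k \<in> A" for k using Mi_ne that unfolding m_def by (metis some_in_eq)
  define x where "x = (\<chi> j. m (blk j) $ j)"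
  have "x \<in> prodset blk Mi A"
    unfolding prodset_def
  proof (intro CollectI conjI allI impI ballI)
    fix k assume k: "k \<in> A"
    have "\<forall>j. blk j \<noteq> k \<longrightarrow> m k $ j = 0" using m[OF k] Mi_sub k by blast
    then have "bproj blk {k} x = m k" by (auto simp: vec_eq_iff x_def)
    then show "bproj blk {k} x \<in> Mi k" using m[OF k] by simp
  qed (use blk in auto)
  then show ?thesis by blast
qed

lemma set_curv_mono:
  assumes "T \<subseteq> S" "S \<subseteq> {1..n}"
  shows "set_curv f blk Mi n T \<le> set_curv f blk Mi n S"
  unfolding set_curv_def
proof (rule SUP_mono, clarify)
  fix x s and \<gamma> :: real
  assume x: "x \<in> prodset blk Mi {1..n}" and s: "s \<in> prodset blk Mi T" and \<gamma>: "0 < \<gamma>" "\<gamma> \<le> 1"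
  define s' where "s' = s + bproj blk (S - T) x"
  have s': "s' \<in> prodset blk Mi S" unfolding s'_def by (rule prodset_extend[OF assms x s])
  have s0: "\<And>j. blk j \<notin> T \<Longrightarrow> s $ j = 0" using s by (simp add: prodset_def)
  have same_step: "s' - bproj blk S x = s - bproj blk T x"
    using assms(1) by (auto simp: vec_eq_iff s'_def)
  have same_lin: "bproj blk S (\<gamma> *\<^sub>R (s - bproj blk T x)) = bproj blk T (\<gamma> *\<^sub>R (s - bproj blk T x))"
    using assms(1) s0 by (auto simp: vec_eq_iff)
  show "\<exists>m\<in>{(x, s, \<gamma>). x \<in> prodset blk Mi {1..n} \<and> s \<in> prodset blk Mi S \<and> 0 < \<gamma> \<and> \<gamma> \<le> 1}.
      ereal (let y = x + \<gamma> *\<^sub>R (s - bproj blk T x)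
             in 2 / \<gamma>^2 * (f y - f x - frechet_derivative f (at x) (bproj blk T (y - x))))
      \<le> (\<lambda>(x, s, \<gamma>). ereal (let y = x + \<gamma> *\<^sub>R (s - bproj blk S x)
             in 2 / \<gamma>^2 * (f y - f x - frechet_derivative f (at x) (bproj blk S (y - x))))) m"
    by (rule bexI[of _ "(x, s', \<gamma>)"]) (use x s' \<gamma> in \<open>auto simp: same_step same_lin Let_def\<close>)
qed

lemma set_curv_all_blocks:
  assumes "\<forall>j. blk j \<in> {1..n}"
  shows "set_curv f blk Mi n {1..n} = glob_curv f (prodset blk Mi {1..n})"
proof -
  have "\<And>x. bproj blk {1..n} x = x" using assms by (simp add: vec_eq_iff)
  then show ?thesis unfolding set_curv_def glob_curv_def by simp
qed

lemma set_curv_le_glob_curv: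
  assumes "\<forall>j. blk j \<in> {1..n}" "S \<subseteq> {1..n}"
  shows "set_curv f blk Mi n S \<le> glob_curv f (prodset blk Mi {1..n})"
  using set_curv_mono[OF assms(2) order_refl] set_curv_all_blocks[OF assms(1)] by metis

lemma set_curv_not_MInf:
  assumes "prodset blk Mi {1..n} \<noteq> {}" "S \<subseteq> {1..n}"
  shows "set_curv f blk Mi n S \<noteq> -\<infinity>"
proof -
  obtain x where x: "x \<in> prodset blk Mi {1..n}" using assms(1) by blast
  have "bproj blk S x \<in> prodset blk Mi S" by (rule bproj_in_prodset[OF x assms(2)])
  then have "ereal (2 * - frechet_derivative f (at x) 0) \<le> set_curv f blk Mi n S"
    unfolding set_curv_def
    by (intro SUP_upper2[of "(x, bproj blk S x, 1)"]) (use x in \<open>auto simp: Let_def\<close>)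
  then show ?thesis by auto
qed

lemma card_subsets_containing:
  assumes "finite A" "i \<in> A" "1 \<le> k"
  shows "card {S. S \<subseteq> A \<and> card S = k \<and> i \<in> S} = (card A - 1) choose (k - 1)"
proof -
  let ?B = "{T. T \<subseteq> A - {i} \<and> card T = k - 1}"
  have "{S. S \<subseteq> A \<and> card S = k \<and> i \<in> S} = insert i ` ?B"
  proof (intro equalityI subsetI)
    fix S assume S: "S \<in> {S. S \<subseteq> A \<and> card S = k \<and> i \<in> S}"
    then have "S - {i} \<in> ?B" using assms(1) finite_subset by fastforce
    moreover have "S = insert i (S - {i})" using S by auto
    ultimately show "S \<in> insert i ` ?B" by blast
  next
    fix S assume "S \<in> insert i ` ?B"
    then obtain T where T: "T \<subseteq> A - {i}" "card T = k - 1" "S = insert i T" by auto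
    then have "card S = k" using assms finite_subset[OF T(1)] by (auto simp: card_insert_if)
    then show "S \<in> {S. S \<subseteq> A \<and> card S = k \<and> i \<in> S}" using T assms(2) by auto
  qed
  moreover have "inj_on (insert i) ?B"
    by (rule inj_onI) (subst (asm) insert_ident; blast)
  ultimately show ?thesis
    using n_subsets[of "A - {i}" "k - 1"] assms by (simp add: card_image)
qed

lemma sum_subsets_sum:
  fixes a :: "'a \<Rightarrow> 'b::comm_semiring_1"
  assumes "finite A" "1 \<le> k"
  shows "(\<Sum>S | S \<subseteq> A \<and> card S = k. \<Sum>i\<in>S. a i) = of_nat ((card A - 1) choose (k - 1)) * sum a A"
proof -
  let ?F = "{S. S \<subseteq> A \<and> card S = k}"
  have "finite ?F" using assms(1) by (simp add: finite_Collect_subsets)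
  have "(\<Sum>S\<in>?F. \<Sum>i\<in>S. a i) = (\<Sum>S\<in>?F. \<Sum>i | i \<in> A \<and> i \<in> S. a i)"
    by (rule sum.cong) (auto intro: sum.cong)
  also have "\<dots> = (\<Sum>i\<in>A. \<Sum>S | S \<in> ?F \<and> i \<in> S. a i)"
    by (rule sum.swap_restrict) (use assms(1) \<open>finite ?F\<close> in auto)
  also have "\<dots> = (\<Sum>i\<in>A. of_nat ((card A - 1) choose (k - 1)) * a i)"
    using card_subsets_containing[OF assms(1) _ assms(2)] by (intro sum.cong) auto
  finally show ?thesis by (simp add: sum_distrib_left)
qed

lemma mean_le_mean_subsets:
  fixes a :: "'a \<Rightarrow> real" and b :: "'a set \<Rightarrow> real"
  assumes "finite A" "1 \<le> k" "k \<le> card A"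
    and ab: "\<And>S i. S \<subseteq> A \<Longrightarrow> card S = k \<Longrightarrow> i \<in> S \<Longrightarrow> a i \<le> b S"
  shows "sum a A / card A \<le> (\<Sum>S | S \<subseteq> A \<and> card S = k. b S) / (card A choose k)"
proof -
  let ?F = "{S. S \<subseteq> A \<and> card S = k}"
  let ?K = "(card A - 1) choose (k - 1)"
  have "real ?K * sum a A = (\<Sum>S\<in>?F. \<Sum>i\<in>S. a i)"
    by (rule sum_subsets_sum[OF assms(1,2), symmetric])
  also have "\<dots> \<le> (\<Sum>S\<in>?F. \<Sum>i\<in>S. b S)"
    using ab by (intro sum_mono) auto
  also have "\<dots> = real k * (\<Sum>S\<in>?F. b S)"
    by (simp add: sum_distrib_left)
  finally have double_count: "real ?K * sum a A \<le> real k * (\<Sum>S\<in>?F. b S)" .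
  have "k * (card A choose k) = card A * ?K"
    using times_binomial_minus1_eq[of k "card A"] assms(2) by simp
  then have absorb: "real k * real (card A choose k) = real (card A) * real ?K"
    by (metis of_nat_mult)
  have pos: "0 < real k" "0 < real (card A)" "0 < real (card A choose k)"
    using assms(2,3) by auto
  have "real k * (real (card A choose k) * sum a A) = real (card A) * (real ?K * sum a A)"
    using absorb by (simp add: algebra_simps)
  also have "\<dots> \<le> real (card A) * (real k * (\<Sum>S\<in>?F. b S))"
    using double_count pos by simp
  finally have "real (card A choose k) * sum a A \<le> real (card A) * (\<Sum>S\<in>?F. b S)"
    using pos by (simp add: algebra_simps)
  then show ?thesis using pos by (simp add: field_simps)
qed

lemma ereal_mean_le:
  fixes b :: "'a \<Rightarrow> ereal"
  assumes "finite F" "F \<noteq> {}" "\<forall>S\<in>F. b S \<le> G" "\<forall>S\<in>F. b S \<noteq> -\<infinity>"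
  shows "ereal (1 / card F) * sum b F \<le> G"
proof (cases G)
  case (real g)
  then have b_real: "b S = ereal (real_of_ereal (b S))" if "S \<in> F" for S
    using assms(3,4) that by (cases "b S") auto
  then have "sum b F = ereal (\<Sum>S\<in>F. real_of_ereal (b S))"
    unfolding sum_ereal[symmetric] by (rule sum.cong[OF refl])
  moreover have "real_of_ereal (b S) \<le> g" if "S \<in> F" for S
    using assms(3) b_real[OF that] that real by (metis ereal_less_eq(3))
  then have "(\<Sum>S\<in>F. real_of_ereal (b S)) \<le> card F * g"
    using sum_mono[of F "\<lambda>S. real_of_ereal (b S)" "\<lambda>_. g"] by simp
  moreover have "0 < card F" using assms(1,2) by (simp add: card_gt_0_iff)
  ultimately show ?thesis using real by (simp add: field_simps)
qed (use assms in auto)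

lemma ereal_mean_le_mean_subsets:
  fixes a :: "'a \<Rightarrow> ereal" and b :: "'a set \<Rightarrow> ereal"
  assumes "finite A" "1 \<le> k" "k \<le> card A"
    and a: "\<And>i. i \<in> A \<Longrightarrow> a i \<noteq> -\<infinity>"
    and b: "\<And>S. S \<subseteq> A \<Longrightarrow> b S \<noteq> -\<infinity>"
    and ab: "\<And>S i. S \<subseteq> A \<Longrightarrow> card S = k \<Longrightarrow> i \<in> S \<Longrightarrow> a i \<le> b S"
  shows "ereal (1 / card A) * sum a A
    \<le> ereal (1 / (card A choose k)) * (\<Sum>S | S \<subseteq> A \<and> card S = k. b S)"
proof -
  let ?F = "{S. S \<subseteq> A \<and> card S = k}"
  have "finite ?F" using assms(1) by (simp add: finite_Collect_subsets)
  have C_pos: "0 < real (card A choose k)" using assms(3) by simp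
  show ?thesis
  proof (cases "\<exists>S\<in>?F. b S = \<infinity>")
    case True
    then have "(\<Sum>S\<in>?F. b S) = \<infinity>" using \<open>finite ?F\<close> by (simp add: sum_Pinfty)
    then show ?thesis using C_pos by simp
  next
    case False
    then have b_real: "b S = ereal (real_of_ereal (b S))" if "S \<in> ?F" for S
      using b[of S] that by (cases "b S") auto
    have a_real: "a i = ereal (real_of_ereal (a i))" if i: "i \<in> A" for i
    proof -
      have "card {S. S \<subseteq> A \<and> card S = k \<and> i \<in> S} \<noteq> 0"
        using card_subsets_containing[OF assms(1) i assms(2)] assms(2,3) by simp
      then obtain S where S: "S \<in> ?F" "i \<in> S"
        by (metis (mono_tags, lifting) card.empty empty_Collect_eq mem_Collect_eq)
      then have "a i \<le> ereal (real_of_ereal (b S))" using ab b_real by auto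
      then show ?thesis using a[OF i] by (cases "a i") auto
    qed
    have "(\<Sum>i\<in>A. real_of_ereal (a i)) / card A
        \<le> (\<Sum>S\<in>?F. real_of_ereal (b S)) / (card A choose k)"
    proof (rule mean_le_mean_subsets[OF assms(1-3)])
      fix S i assume S: "S \<subseteq> A" "card S = k" "i \<in> S"
      then have "ereal (real_of_ereal (a i)) \<le> ereal (real_of_ereal (b S))"
        using ab[OF S] a_real[of i] b_real[of S] by auto
      then show "real_of_ereal (a i) \<le> real_of_ereal (b S)" by simp
    qed
    moreover have "sum a A = ereal (\<Sum>i\<in>A. real_of_ereal (a i))"
      unfolding sum_ereal[symmetric] using a_real by (rule sum.cong[OF refl])
    moreover have "(\<Sum>S\<in>?F. b S) = ereal (\<Sum>S\<in>?F. real_of_ereal (b S))"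
      unfolding sum_ereal[symmetric] using b_real by (rule sum.cong[OF refl])
    ultimately show ?thesis by (simp add: mult.commute)
  qed
qed

lemma tau_curv_one:
  "tau_curv f blk Mi n 1 = ereal (1 / real n) * prod_curv f blk Mi n"
proof -
  have "{S. S \<subseteq> {1..n} \<and> card S = 1} = (\<lambda>i. {i}) ` {1..n}"
    by (auto simp: card_1_singleton_iff)
  then show ?thesis
    unfolding tau_curv_def prod_curv_def coord_curv_def
    by (simp add: sum.reindex inj_on_def)
qed

lemma tau_curv_all_blocks:
  assumes "\<forall>j. blk j \<in> {1..n}"
  shows "tau_curv f blk Mi n n = glob_curv f (prodset blk Mi {1..n})"
proof -
  have "{S. S \<subseteq> {1..n} \<and> card S = n} = {{1..n}}"
    using card_subset_eq[of "{1..n}"] by auto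
  then show ?thesis
    unfolding tau_curv_def using set_curv_all_blocks[OF assms] by (simp add: one_ereal_def[symmetric])
qed

lemma tau_curv_le_glob_curv:
  assumes "\<forall>j. blk j \<in> {1..n}" "prodset blk Mi {1..n} \<noteq> {}" "\<tau> \<le> n"
  shows "tau_curv f blk Mi n \<tau> \<le> glob_curv f (prodset blk Mi {1..n})"
proof -
  let ?F = "{S. S \<subseteq> {1..n} \<and> card S = \<tau>}"
  have "card ?F = n choose \<tau>" using n_subsets[of "{1..n}" \<tau>] by simp
  moreover have "?F \<noteq> {}"
    using assms(3) \<open>card ?F = n choose \<tau>\<close> by (metis binomial_eq_0_iff card.empty not_le)
  ultimately show ?thesis
    unfolding tau_curv_def
    using ereal_mean_le[of ?F] set_curv_le_glob_curv[OF assms(1)] set_curv_not_MInf[OF assms(2)]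
    by (simp add: finite_Collect_subsets)
qed

lemma tau_curv_one_le:
  assumes "prodset blk Mi {1..n} \<noteq> {}" "1 \<le> \<tau>" "\<tau> \<le> n"
  shows "tau_curv f blk Mi n 1 \<le> tau_curv f blk Mi n \<tau>"
proof -
  have "ereal (1 / real n) * prod_curv f blk Mi n \<le> tau_curv f blk Mi n \<tau>"
    unfolding prod_curv_def coord_curv_def tau_curv_def
    using ereal_mean_le_mean_subsets[of "{1..n}" \<tau> "\<lambda>i. set_curv f blk Mi n {i}" "set_curv f blk Mi n"]
      assms set_curv_not_MInf[OF assms(1)] set_curv_mono[of "{_}" _ n f blk Mi]
    by simp
  then show ?thesis unfolding tau_curv_one .
qed

theorem lemma1:
  fixes f :: "real^'m \<Rightarrow> real" and blk :: "'m \<Rightarrow> nat" and Mi :: "nat \<Rightarrow> (real^'m) set"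
    and n \<tau> i :: nat and S :: "nat set"
  assumes blk: "\<forall>j. blk j \<in> {1..n}"
    and Mi_sub: "\<forall>k\<in>{1..n}. Mi k \<subseteq> {v. \<forall>j. blk j \<noteq> k \<longrightarrow> v $ j = 0}"
    and Mi_ne: "\<forall>k\<in>{1..n}. Mi k \<noteq> {}"
    and Mi_compact: "\<forall>k\<in>{1..n}. compact (Mi k)"
    and Mi_convex: "\<forall>k\<in>{1..n}. convex (Mi k)"
    and f_diff: "\<forall>x. f differentiable (at x)"
    and S: "S \<subseteq> {1..n}" "card S = \<tau>" "i \<in> S"
  shows "coord_curv f blk Mi n i \<le> set_curv f blk Mi n S
       \<and> set_curv f blk Mi n S \<le> glob_curv f (prodset blk Mi {1..n})
       \<and> ereal (1 / real n) * prod_curv f blk Mi n = tau_curv f blk Mi n 1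
       \<and> tau_curv f blk Mi n 1 \<le> tau_curv f blk Mi n \<tau>
       \<and> tau_curv f blk Mi n \<tau> \<le> tau_curv f blk Mi n n
       \<and> tau_curv f blk Mi n n = glob_curv f (prodset blk Mi {1..n})"
proof -
  have feasible: "prodset blk Mi {1..n} \<noteq> {}" by (rule prodset_nonempty[OF blk Mi_sub Mi_ne])
  have "1 \<le> \<tau>" using S by (metis card_0_eq empty_iff finite_subset finite_atLeastAtMost less_one not_le)
  have "\<tau> \<le> n" using card_mono[OF _ S(1)] S(2) by simp
  have "coord_curv f blk Mi n i \<le> set_curv f blk Mi n S"
    unfolding coord_curv_def using S by (intro set_curv_mono) auto
  moreover have "tau_curv f blk Mi n \<tau> \<le> tau_curv f blk Mi n n"
    using tau_curv_le_glob_curv[OF blk feasible \<open>\<tau> \<le> n\<close>] tau_curv_all_blocks[OF blk] by simp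
  ultimately show ?thesis
    using set_curv_le_glob_curv[OF blk S(1)] tau_curv_one[symmetric]
      tau_curv_one_le[OF feasible \<open>1 \<le> \<tau>\<close> \<open>\<tau> \<le> n\<close>] tau_curv_all_blocks[OF blk]
    by blast
qed

end
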